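(* Assume the Standing Setting below, let $x^*_\rho$ be the limit of the LQP sequence $\{x_k\}_{k\ge0}$, let $P^*=\lim_k P_k$ and $\mathcal{E}_k=P_k-P^*$. If $\mathcal{P}_\rho$ satisfies the KL property at $x^*_\rho$ with desingularizing function $\varphi\in\Psi_\tau$ ($\tau>0$), then there exist $k_1\ge1$ and $C>0$ such that for all $k\ge k_1$, $$\|x_k-x^*_\rho\|\le C\max\{\varphi(\mathcal{E}_k),\sqrt{\mathcal{E}_{k-1}}\}.$$
   Context: Standing Setting. $f:\mathbb{R}^n\to\mathbb{R}$ and $F=(f_1,\dots,f_m)^T:\mathbb{R}^n\to\mathbb{R}^m$ are continuously differentiable; $\|\cdot\|$ is the Euclidean/spectral norm; $J_F(x)\in\mathbb{R}^{m\times n}$ is the Jacobian of $F$. The penalty function is $\mathcal{P}_\rho(x)=f(x)+\frac{\rho}{2}\|F(x)\|^2$ and $\bar{\mathcal{P}}_\rho(x;\bar x)=f(\bar x)+\langle\nabla f(\bar x),x-\bar x\rangle+\frac{\rho}{2}\|F(\bar x)+J_F(\bar x)(x-\bar x)\|^2$. Assumption 1: there is $\rho_0\ge0$ and a value for which the sublevel set $\{x: f(x)+\frac{\rho_0}{2}\|F(x)\|^2\le\cdot\}$ is nonempty and compact; $\bar L:=\inf_x\{f(x)+\frac{\rho_0}{2}\|F(x)\|^2\}$ (finite). Assumption 2 on a compact convex set $\mathcal{S}$: there are constants $L_f,M_F,L_F>0$ with $\|\nabla f(x)-\nabla f(y)\|\le L_f\|x-y\|$, $\|J_F(x)\|\le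 M_F$, $\|J_F(x)-J_F(y)\|\le L_F\|x-y\|$ for all $x,y\in\mathcal{S}$, and LICQ holds on $\mathcal{S}$ (i.e. $J_F(x)$ has full row rank for every $x\in\mathcal{S}$). Assumption 3: there is a finite $\bar\alpha$ with $f(x)\le\bar\alpha$ for all $x$ with $\|F(x)\|\le1$. Parameters: $\rho\ge\max\{1,3\rho_0\}$; $x_0$ satisfies $f(x_0)\le\bar\alpha$ and $\|F(x_0)\|^2\le\min\{1,2c_0/\rho\}$ for some $c_0>0$; $\alpha:=\bar\alpha+c_0$. LQP method: given $x_0$, $\underline\beta>0$, for $k=0,1,\dots$ choose $\beta_{k+1}\ge\underline\beta$ such that $x_{k+1}:=\arg\min_x\{\bar{\mathcal{P}}_\rho(x;x_k)+\frac{\beta_{k+1}}{2}\|x-x_k\|^2\}$ satisfies $\mathcal{P}_\rho(x_{k+1})\le\mathcal{P}_\rho(x_k)-\frac{\beta_{k+1}}{2}\|x_{k+1}-x_k\|^2$. It is assumed that all iterates $x_k$ lie in $\mathcal{S}$ and that $\underline\beta\le\beta_k\le\bar\beta<\infty$ for all $k\ge1$. Notation: $P_k=\mathcal{P}_\rho(x_k)$, $\Delta x_k=x_k-x_{k-1}$. KL property: for $\tau\in(0,\infty]$, $\Psi_\tau$ is the set of continuous concave $\varphi:[0,\tau]\to[0,\infty)$ with $\varphi(0)=0$, $\varphi$ continuously differentiable on $(0,\tau)$ and $\varphi'>0$ there. A continuously differentiable $\Phi$ taking a constant value on a set $\Omega$ satisfies the KL property on $\Omega$ if there exist $\epsilon>0$,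 $\tau>0$, $\varphi\in\Psi_\tau$ such that for every $x^*\in\Omega$ and every $x$ with $\mathrm{dist}(x,\Omega)<\epsilon$ and $\Phi(x^* )<\Phi(x)<\Phi(x^* )+\tau$ one has $\varphi'(\Phi(x)-\Phi(x^* ))\,\|\nabla\Phi(x)\|\ge1$. "KL at a point $x^*$" means KL on $\Omega=\{x^*\}$; $\varphi$ is then called a desingularizing function. *)

theory Defs
  imports "HOL-Analysis.Analysis"
begin

definition Pen :: "(real^'n \<Rightarrow> real) \<Rightarrow> (real^'n \<Rightarrow> real^'m) \<Rightarrow> real \<Rightarrow> real^'n \<Rightarrow> real" where
  "Pen f F \<rho> x = f x + \<rho> / 2 * (norm (F x))\<^sup>2"

definition Pbar :: "(real^'n \<Rightarrow> real) \<Rightarrow> (real^'n \<Rightarrow> real^'n) \<Rightarrow> (real^'n \<Rightarrow> real^'m)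
    \<Rightarrow> (real^'n \<Rightarrow> real^'n^'m) \<Rightarrow> real \<Rightarrow> real^'n \<Rightarrow> real^'n \<Rightarrow> real" where
  "Pbar f gradf F JF \<rho> xb x =
     f xb + gradf xb \<bullet> (x - xb) + \<rho> / 2 * (norm (F xb + JF xb *v (x - xb)))\<^sup>2"

text \<open>The class Psi_tau of desingularizing functions, tau in (0, infinity] (as an ereal).
  Domain [0,tau] is {t. 0 <= t and t <= tau}; the open interval (0,tau) is {t. 0 < t and t < tau}.\<close>
definition Psi :: "ereal \<Rightarrow> (real \<Rightarrow> real) set" where
  "Psi \<tau> = {\<phi>.
     continuous_on {t. 0 \<le> t \<and> ereal t \<le> \<tau>} \<phi> \<and>
     concave_on {t. 0 \<le> t \<and> ereal t \<le> \<tau>} \<phi> \<and>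
     \<phi> 0 = 0 \<and>
     (\<forall>t. 0 \<le> t \<and> ereal t \<le> \<tau> \<longrightarrow> 0 \<le> \<phi> t) \<and>
     (\<forall>t. 0 < t \<and> ereal t < \<tau> \<longrightarrow> \<phi> differentiable (at t) \<and> 0 < deriv \<phi> t) \<and>
     continuous_on {t. 0 < t \<and> ereal t < \<tau>} (deriv \<phi>)}"

definition KL_at :: "('a::real_inner \<Rightarrow> real) \<Rightarrow> 'a \<Rightarrow> ereal \<Rightarrow> (real \<Rightarrow> real) \<Rightarrow> bool" where
  "KL_at \<Phi> xs \<tau> \<phi> \<longleftrightarrow> 0 < \<tau> \<and> \<phi> \<in> Psi \<tau> \<and>
     (\<exists>\<epsilon>>0. \<forall>x g. dist x xs < \<epsilon> \<and> \<Phi> xs < \<Phi> x \<and> ereal (\<Phi> x) < ereal (\<Phi> xs) + \<tau>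
        \<and> GDERIV \<Phi> x :> g \<longrightarrow> 1 \<le> deriv \<phi> (\<Phi> x - \<Phi> xs) * norm g)"

end

theory Submission
  imports Defs
begin

text \<open>
  Write \<open>E\<^sub>k = P\<^sub>k - P\<^sup>*\<close> and \<open>d\<^sub>k = \<parallel>x\<^sub>k\<^sub>+\<^sub>1 - x\<^sub>k\<parallel>\<close>. Sufficient decrease gives
  \<open>\<beta>/2 d\<^sub>k\<^sup>2 \<le> E\<^sub>k - E\<^sub>k\<^sub>+\<^sub>1\<close>, and the optimality condition of the linearized subproblem bounds
  the gradient: \<open>\<parallel>\<nabla>P(x\<^sub>k\<^sub>+\<^sub>1)\<parallel> \<le> b d\<^sub>k\<close>. Near the limit, the KL inequality at \<open>x\<^sub>k\<close>, the
  concavity of \<open>\<phi>\<close> and AM-GM combine these into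
  \<open>2 d\<^sub>k \<le> d\<^sub>k\<^sub>-\<^sub>1 + M (\<phi>(E\<^sub>k) - \<phi>(E\<^sub>k\<^sub>+\<^sub>1))\<close>. Summing, the \<open>\<phi>\<close>-terms telescope, so the
  length of the tail of the trajectory, and with it \<open>\<parallel>x\<^sub>k - x\<^sup>*\<parallel>\<close>, is at most
  \<open>d\<^sub>k\<^sub>-\<^sub>1 + M \<phi>(E\<^sub>k)\<close>; finally \<open>d\<^sub>k\<^sub>-\<^sub>1 \<le> \<surd>(2 E\<^sub>k\<^sub>-\<^sub>1 / \<beta>)\<close> by sufficient decrease.
\<close>

lemma norm_transpose_mult_le_onorm:
  fixes A :: "real^'n^'m" and v :: "real^'m"
  shows "norm (transpose A *v v) \<le> onorm ((*v) A) * norm v"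
proof -
  let ?w = "transpose A *v v"
  have "(norm ?w)\<^sup>2 = v \<bullet> (A *v ?w)"
    by (metis dot_lmul_matrix power2_norm_eq_inner transpose_matrix_vector)
  also have "\<dots> \<le> norm v * norm (A *v ?w)" by (rule norm_cauchy_schwarz)
  also have "\<dots> \<le> norm v * (onorm ((*v) A) * norm ?w)"
    by (intro mult_left_mono onorm) auto
  finally have "norm ?w * norm ?w \<le> norm ?w * (onorm ((*v) A) * norm v)"
    by (simp add: power2_eq_square algebra_simps)
  then show ?thesis
    using onorm_pos_le[OF matrix_vector_mul_bounded_linear, of A]
    by (cases "norm ?w = 0") auto
qed

lemma transpose_diff: "transpose (A - B) = transpose A - (transpose B :: real^'n^'m)"
  by (simp add: transpose_def vec_eq_iff)

lemma GDERIV_Pen: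
  fixes f :: "real^'n \<Rightarrow> real" and F :: "real^'n \<Rightarrow> real^'m"
  assumes "GDERIV f y :> g" "(F has_derivative (\<lambda>h. J *v h)) (at y)"
  shows "GDERIV (Pen f F \<rho>) y :> g + \<rho> *\<^sub>R (transpose J *v F y)"
proof -
  have Pen_eq: "Pen f F \<rho> = (\<lambda>z. f z + \<rho> / 2 * (F z \<bullet> F z))"
    by (rule ext) (simp add: Pen_def power2_norm_eq_inner)
  have "((\<lambda>z. f z + \<rho> / 2 * (F z \<bullet> F z)) has_derivative
      (\<lambda>h. h \<bullet> g + \<rho> / 2 * ((J *v h) \<bullet> F y + F y \<bullet> (J *v h)))) (at y)"
    using assms unfolding gderiv_def by (intro derivative_eq_intros) auto
  moreover have "(\<lambda>h. h \<bullet> g + \<rho> / 2 * ((J *v h) \<bullet> F y + F y \<bullet> (J *v h)))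
      = (\<lambda>h. h \<bullet> (g + \<rho> *\<^sub>R (transpose J *v F y)))"
    by (rule ext) (simp add: inner_add_right inner_commute[of _ "F y v* J"]
        inner_commute[of "J *v _" "F y"] dot_lmul_matrix algebra_simps)
  ultimately show ?thesis unfolding gderiv_def Pen_eq by simp
qed

lemma Pbar_prox_stationary:
  fixes f :: "real^'n \<Rightarrow> real" and F :: "real^'n \<Rightarrow> real^'m"
  assumes "\<And>y. Pbar f gradf F JF \<rho> x0 x1 + \<beta> / 2 * (norm (x1 - x0))\<^sup>2
                \<le> Pbar f gradf F JF \<rho> x0 y + \<beta> / 2 * (norm (y - x0))\<^sup>2"
  shows "gradf x0 + \<rho> *\<^sub>R (transpose (JF x0) *v (F x0 + JF x0 *v (x1 - x0))) + \<beta> *\<^sub>R (x1 - x0) = 0"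
proof -
  define J where "J = JF x0"
  define r where "r = F x0 + J *v (x1 - x0)"
  define G where "G = gradf x0 + \<rho> *\<^sub>R (transpose J *v r) + \<beta> *\<^sub>R (x1 - x0)"
  define h where "h y = f x0 + gradf x0 \<bullet> (y - x0)
      + \<rho> / 2 * ((F x0 + J *v (y - x0)) \<bullet> (F x0 + J *v (y - x0))) + \<beta> / 2 * ((y - x0) \<bullet> (y - x0))" for y
  have h_eq: "h y = Pbar f gradf F JF \<rho> x0 y + \<beta> / 2 * (norm (y - x0))\<^sup>2" for y
    by (simp add: h_def Pbar_def J_def power2_norm_eq_inner)
  have lin: "((\<lambda>y. J *v (y - x0)) has_derivative (\<lambda>v. J *v v)) (at x1)"
  proof -
    have "((\<lambda>y. J *v y - J *v x0) has_derivative (\<lambda>v. J *v v - 0)) (at x1)"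
      by (intro derivative_intros bounded_linear_imp_has_derivative) auto
    then show ?thesis by (simp add: matrix_vector_mult_diff_distrib)
  qed
  have "(h has_derivative (\<lambda>v. gradf x0 \<bullet> v + \<rho> / 2 * ((J *v v) \<bullet> r + r \<bullet> (J *v v))
      + \<beta> / 2 * (v \<bullet> (x1 - x0) + (x1 - x0) \<bullet> v))) (at x1)"
    unfolding h_def[abs_def] r_def
    by (rule has_derivative_eq_rhs, (rule lin derivative_intros)+) (simp add: algebra_simps)
  moreover have "(\<lambda>v. gradf x0 \<bullet> v + \<rho> / 2 * ((J *v v) \<bullet> r + r \<bullet> (J *v v))
      + \<beta> / 2 * (v \<bullet> (x1 - x0) + (x1 - x0) \<bullet> v)) = (\<lambda>v. v \<bullet> G)"
    by (rule ext) (simp add: G_def inner_add_right inner_commute[of _ "r v* J"]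
        inner_commute[of "J *v _" r] inner_commute[of _ "gradf x0"] inner_commute[of _ "x1 - x0"]
        dot_lmul_matrix algebra_simps inner_diff_right inner_diff_left inner_commute[of x1]
        inner_commute[of x0])
  ultimately have "(h has_derivative (\<lambda>v. v \<bullet> G)) (at x1)" by simp
  moreover have "eventually (\<lambda>y. h x1 \<le> h y) (at x1)"
    using assms by (simp add: h_eq)
  ultimately have "(\<lambda>v. v \<bullet> G) = (\<lambda>v. 0)" by (rule has_derivative_local_min)
  then have "G \<bullet> G = 0" by meson
  then show ?thesis by (simp add: G_def J_def r_def)
qed

lemma norm_linearization_residual_le:
  fixes F :: "real^'n \<Rightarrow> real^'m" and JF :: "real^'n \<Rightarrow> real^'n^'m"
  assumes F_deriv: "\<And>y. (F has_derivative (\<lambda>h. JF y *v h)) (at y)"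
    and S: "convex S" "x0 \<in> S" "x1 \<in> S"
    and MF: "\<And>y. y \<in> S \<Longrightarrow> onorm (\<lambda>h. JF y *v h) \<le> MF"
  shows "norm (F x1 - F x0 - JF x0 *v (x1 - x0)) \<le> 2 * MF * norm (x1 - x0)"
proof -
  have "norm (F x1 - F x0) \<le> MF * norm (x1 - x0)"
    by (rule differentiable_bound[OF S(1) _ MF S(3,2)]) (rule has_derivative_at_withinI[OF F_deriv])
  moreover have "norm (JF x0 *v (x1 - x0)) \<le> MF * norm (x1 - x0)"
    using onorm[OF matrix_vector_mul_bounded_linear, of "JF x0" "x1 - x0"] MF[OF S(2)]
    by (metis mult_right_mono norm_ge_zero order_trans)
  ultimately show ?thesis
    using norm_triangle_ineq4[of "F x1 - F x0" "JF x0 *v (x1 - x0)"] by simp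
qed

lemma norm_grad_Pen_le_step:
  fixes f :: "real^'n \<Rightarrow> real" and F :: "real^'n \<Rightarrow> real^'m" and JF :: "real^'n \<Rightarrow> real^'n^'m"
  assumes F_deriv: "\<And>y. (F has_derivative (\<lambda>h. JF y *v h)) (at y)"
    and S: "convex S" "x0 \<in> S" "x1 \<in> S"
    and Lf: "\<And>y z. y \<in> S \<Longrightarrow> z \<in> S \<Longrightarrow> norm (gradf y - gradf z) \<le> Lf * norm (y - z)"
    and MF: "\<And>y. y \<in> S \<Longrightarrow> onorm (\<lambda>h. JF y *v h) \<le> MF"
    and LF: "\<And>y z. y \<in> S \<Longrightarrow> z \<in> S \<Longrightarrow> onorm (\<lambda>h. (JF y - JF z) *v h) \<le> LF * norm (y - z)"
    and F_bound: "\<And>y. y \<in> S \<Longrightarrow> norm (F y) \<le> B"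
    and prox: "\<And>y. Pbar f gradf F JF \<rho> x0 x1 + \<beta> / 2 * (norm (x1 - x0))\<^sup>2
                     \<le> Pbar f gradf F JF \<rho> x0 y + \<beta> / 2 * (norm (y - x0))\<^sup>2"
    and "\<rho> \<ge> 0" "0 \<le> \<beta>" "\<beta> \<le> \<beta>up"
  shows "norm (gradf x1 + \<rho> *\<^sub>R (transpose (JF x1) *v F x1))
           \<le> (Lf + \<rho> * (LF * B + 2 * MF * MF) + \<beta>up) * norm (x1 - x0)"
proof -
  define d where "d = x1 - x0"
  define J0 where "J0 = JF x0"
  define J1 where "J1 = JF x1"
  define R where "R = (F x1 - F x0) - J0 *v d"
  have "gradf x0 + \<rho> *\<^sub>R (transpose J0 *v (F x0 + J0 *v d)) + \<beta> *\<^sub>R d = 0"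
    using Pbar_prox_stationary[OF prox] by (simp add: J0_def d_def)
  \<comment> \<open>Subtracting this stationarity condition leaves only differences that are Lipschitz in \<open>d\<close>.\<close>
  then have grad_eq: "gradf x1 + \<rho> *\<^sub>R (transpose J1 *v F x1) =
      (gradf x1 - gradf x0) + \<rho> *\<^sub>R (transpose (J1 - J0) *v F x1 + transpose J0 *v R) - \<beta> *\<^sub>R d"
    by (simp add: R_def transpose_diff algebra_simps matrix_vector_mult_diff_rdistrib)
  have MF0: "0 \<le> MF"
    using MF[OF S(2)] onorm_pos_le[OF matrix_vector_mul_bounded_linear, of J0] by (simp add: J0_def)
  have R_le: "norm R \<le> 2 * MF * norm d"
    using norm_linearization_residual_le[OF F_deriv S MF] by (simp add: R_def J0_def d_def)
  have "norm (gradf x1 - gradf x0) \<le> Lf * norm d"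
    using Lf[OF S(3,2)] by (simp add: d_def)
  moreover have "norm (transpose (J1 - J0) *v F x1) \<le> LF * norm d * B"
  proof -
    have "onorm ((*v) (J1 - J0)) \<le> LF * norm d" using LF[OF S(3,2)] by (simp add: J0_def J1_def d_def)
    moreover have "0 \<le> onorm ((*v) (J1 - J0))"
      using onorm_pos_le[OF matrix_vector_mul_bounded_linear] .
    ultimately show ?thesis
      using norm_transpose_mult_le_onorm[of "J1 - J0" "F x1"] F_bound[OF S(3)]
      by (meson mult_mono norm_ge_zero order_trans)
  qed
  moreover have "norm (transpose J0 *v R) \<le> MF * (2 * MF * norm d)"
    using norm_transpose_mult_le_onorm[of J0 R] MF[OF S(2)] R_le MF0
    by (simp add: J0_def) (meson mult_mono norm_ge_zero order_trans)
  moreover have "norm (gradf x1 + \<rho> *\<^sub>R (transpose J1 *v F x1)) \<le> norm (gradf x1 - gradf x0)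
      + \<rho> * (norm (transpose (J1 - J0) *v F x1) + norm (transpose J0 *v R)) + \<beta> * norm d"
    unfolding grad_eq using \<open>\<rho> \<ge> 0\<close> \<open>0 \<le> \<beta>\<close>
    by (smt (verit) norm_scaleR norm_triangle_ineq norm_triangle_ineq4 mult_left_mono)
  ultimately have "norm (gradf x1 + \<rho> *\<^sub>R (transpose J1 *v F x1))
      \<le> Lf * norm d + \<rho> * (LF * norm d * B + MF * (2 * MF * norm d)) + \<beta>up * norm d"
    using \<open>\<rho> \<ge> 0\<close> \<open>0 \<le> \<beta>\<close> \<open>\<beta> \<le> \<beta>up\<close>
    by (smt (verit, best) add_mono mult_left_mono mult_right_mono norm_ge_zero)
  then show ?thesis by (simp add: J1_def d_def algebra_simps)
qed

lemma PsiD: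
  assumes "\<phi> \<in> Psi \<tau>"
  shows "concave_on {t. 0 \<le> t \<and> ereal t \<le> \<tau>} \<phi>"
    and "0 \<le> t \<Longrightarrow> ereal t \<le> \<tau> \<Longrightarrow> 0 \<le> \<phi> t"
    and "0 < t \<Longrightarrow> ereal t < \<tau> \<Longrightarrow> (\<phi> has_real_derivative deriv \<phi> t) (at t)"
    and "0 < t \<Longrightarrow> ereal t < \<tau> \<Longrightarrow> 0 < deriv \<phi> t"
  using assms unfolding Psi_def mem_Collect_eq DERIV_deriv_iff_real_differentiable by blast+

lemma Psi_above_tangent:
  assumes phi: "\<phi> \<in> Psi \<tau>" and c: "0 < c" "ereal c < \<tau>" and s: "0 \<le> s" "s \<le> c"
  shows "deriv \<phi> c * (c - s) \<le> \<phi> c - \<phi> s"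
proof -
  obtain T where T: "c < T" "ereal T < \<tau>" using ereal_dense2[OF c(2)] by auto
  have "{0..T} \<subseteq> {t. 0 \<le> t \<and> ereal t \<le> \<tau>}"
  proof
    fix t assume "t \<in> {0..T}"
    then have "0 \<le> t" "ereal t \<le> ereal T" by auto
    then show "t \<in> {t. 0 \<le> t \<and> ereal t \<le> \<tau>}"
      using order.strict_trans1[OF _ T(2)] by (simp add: less_imp_le)
  qed
  from convex_on_subset[OF PsiD(1)[OF phi, unfolded concave_on_def] this convex_real_interval(5)]
  have "convex_on {0..T} (\<lambda>t. - \<phi> t)" .
  moreover have "c \<in> interior {0..T}" "s \<in> {0..T}" using c s T by auto
  moreover have "((\<lambda>t. - \<phi> t) has_real_derivative - deriv \<phi> c) (at c within {0..T})"
    using DERIV_minus[OF PsiD(3)[OF phi c]] by (rule has_field_derivative_at_within)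
  ultimately have "- deriv \<phi> c * (s - c) \<le> - \<phi> s - - \<phi> c"
    by (rule convex_on_imp_above_tangent[OF _ connected_Icc])
  then show ?thesis by (simp add: algebra_simps)
qed

lemma double_le_add_of_square_le_mult:
  fixes s q X :: real
  assumes "s\<^sup>2 \<le> q * X" "0 \<le> q" "0 \<le> X"
  shows "2 * s \<le> q + X"
proof -
  have "(2 * s)\<^sup>2 \<le> (q + X)\<^sup>2"
    using assms(1) sum_squares_ge_zero[of "q - X" 0] by (simp add: power2_eq_square algebra_simps)
  then show ?thesis using assms(2,3) by (rule power2_le_imp_le[OF _ add_nonneg_nonneg])
qed

text \<open>The one-step estimate of the KL argument, with \<open>e, e'\<close> the consecutive excesses,
  \<open>s\<close> the new step, \<open>q\<close> the previous step and \<open>g\<close> the gradient norm at the current point.\<close>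

lemma KL_descent_step:
  fixes s q g b c e e' :: real
  assumes phi: "\<phi> \<in> Psi \<tau>" and e: "0 < e" "ereal e < \<tau>" "0 \<le> e'"
    and KL: "1 \<le> deriv \<phi> e * g" and rel_err: "g \<le> b * q"
    and decrease: "c / 2 * s\<^sup>2 \<le> e - e'"
    and "0 < b" "0 < c" "0 \<le> q"
  shows "2 * s \<le> q + 2 * b / c * (\<phi> e - \<phi> e')"
proof -
  have d_pos: "0 < deriv \<phi> e" using PsiD(4)[OF phi e(1,2)] .
  have "0 \<le> c / 2 * s\<^sup>2" using \<open>0 < c\<close> by simp
  then have "e' \<le> e" using decrease by linarith
  then have "deriv \<phi> e * (e - e') \<le> \<phi> e - \<phi> e'" by (rule Psi_above_tangent[OF phi e])
  then have "deriv \<phi> e * s\<^sup>2 \<le> 2 / c * (\<phi> e - \<phi> e')"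
    using mult_left_mono[OF decrease less_imp_le[OF d_pos]] \<open>0 < c\<close>
    by (simp add: field_simps)
  have "1 \<le> deriv \<phi> e * (b * q)"
    using KL mult_left_mono[OF rel_err less_imp_le[OF d_pos]] by linarith
  then have "s\<^sup>2 * 1 \<le> s\<^sup>2 * (deriv \<phi> e * (b * q))" by (rule mult_left_mono) simp
  then have "s\<^sup>2 \<le> (b * q) * (deriv \<phi> e * s\<^sup>2)" by (simp add: algebra_simps)
  also have "\<dots> \<le> (b * q) * (2 / c * (\<phi> e - \<phi> e'))"
    using \<open>deriv \<phi> e * s\<^sup>2 \<le> _\<close> \<open>0 < b\<close> \<open>0 \<le> q\<close> by (intro mult_left_mono) auto
  finally have "s\<^sup>2 \<le> q * (2 * b / c * (\<phi> e - \<phi> e'))" by (simp add: algebra_simps)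
  moreover have "0 \<le> \<phi> e - \<phi> e'"
    using \<open>deriv \<phi> e * (e - e') \<le> _\<close> mult_nonneg_nonneg[of "deriv \<phi> e" "e - e'"] d_pos \<open>e' \<le> e\<close>
    by linarith
  ultimately show ?thesis
    using double_le_add_of_square_le_mult \<open>0 < b\<close> \<open>0 < c\<close> \<open>0 \<le> q\<close> by simp
qed

lemma sum_le_of_KL_recursion:
  fixes a ph :: "nat \<Rightarrow> real"
  assumes step: "\<And>k. k \<ge> K \<Longrightarrow> 2 * a k \<le> a (k - 1) + M * (ph k - ph (Suc k))"
    and "\<And>k. a k \<ge> 0" "\<And>k. k \<ge> K \<Longrightarrow> ph k \<ge> 0" "M \<ge> 0"
  shows "(\<Sum>k=K..K+n. a k) \<le> a (K - 1) + M * ph K"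
proof -
  have "(\<Sum>k=K..K+n. a k) + a (K + n) \<le> a (K - 1) + M * ph K - M * ph (Suc (K + n))"
  proof (induction n)
    case 0
    then show ?case using step[of K] by (simp add: algebra_simps)
  next
    case (Suc n)
    then show ?case using step[of "K + Suc n"] by (simp add: algebra_simps)
  qed
  moreover have "M * ph (Suc (K + n)) \<ge> 0" using assms(3)[of "Suc (K + n)"] \<open>M \<ge> 0\<close> by simp
  ultimately show ?thesis using assms(2)[of "K + n"] by linarith
qed

lemma norm_diff_limit_le_path_length:
  fixes x :: "nat \<Rightarrow> 'a::real_normed_vector"
  assumes "x \<longlonglongrightarrow> l" and "\<And>n. (\<Sum>k=K..K+n. norm (x (Suc k) - x k)) \<le> B"
  shows "norm (x K - l) \<le> B"
proof -
  have "(\<lambda>n. x (n + Suc K)) \<longlonglongrightarrow> l" by (rule LIMSEQ_ignore_initial_segment[OF assms(1)])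
  then have "(\<lambda>n. norm (x (n + Suc K) - x K)) \<longlonglongrightarrow> norm (l - x K)" by (intro tendsto_intros)
  moreover have "norm (x (n + Suc K) - x K) \<le> B" for n
  proof -
    have "x (n + Suc K) - x K = (\<Sum>k=K..K+n. x (Suc k) - x k)"
      by (subst sum_Suc_diff) (auto simp: add.commute)
    then show ?thesis by (simp only: order_trans[OF norm_sum assms(2)])
  qed
  ultimately have "norm (l - x K) \<le> B" by (intro LIMSEQ_le_const2) auto
  then show ?thesis by (simp add: norm_minus_commute)
qed

context
  fixes \<Phi> :: "'a::real_inner \<Rightarrow> real" and G :: "'a \<Rightarrow> 'a" and x :: "nat \<Rightarrow> 'a"
    and xs :: 'a and b c Pstar :: real
  assumes grad: "\<And>y. GDERIV \<Phi> y :> G y" and b_pos: "0 < b" and c_pos: "0 < c"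
    and decrease: "\<And>k. c / 2 * (norm (x (Suc k) - x k))\<^sup>2 \<le> \<Phi> (x k) - \<Phi> (x (Suc k))"
    and rel_err: "\<And>k. norm (G (x (Suc k))) \<le> b * norm (x (Suc k) - x k)"
    and lim_x: "x \<longlonglongrightarrow> xs" and lim_P: "(\<lambda>k. \<Phi> (x k)) \<longlonglongrightarrow> Pstar"
begin

lemma descent_limit_value: "\<Phi> xs = Pstar"
proof -
  have "isCont \<Phi> xs"
    using grad[of xs] unfolding gderiv_def by (rule has_derivative_continuous)
  then show ?thesis using isCont_tendsto_compose[OF _ lim_x] lim_P LIMSEQ_unique by blast
qed

lemma descent_excess_nonneg: "Pstar \<le> \<Phi> (x k)"
proof -
  have "decseq (\<lambda>k. \<Phi> (x k))"
  proof (rule decseq_SucI)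
    fix k
    have "0 \<le> c / 2 * (norm (x (Suc k) - x k))\<^sup>2" using c_pos by simp
    then show "\<Phi> (x (Suc k)) \<le> \<Phi> (x k)" using decrease[of k] by linarith
  qed
  then show ?thesis using decseq_ge lim_P by blast
qed

lemma descent_step_le_sqrt_excess: "norm (x (Suc k) - x k) \<le> sqrt (2 / c) * sqrt (\<Phi> (x k) - Pstar)"
proof -
  have "(norm (x (Suc k) - x k))\<^sup>2 \<le> 2 / c * (\<Phi> (x k) - Pstar)"
    using decrease[of k] descent_excess_nonneg[of "Suc k"] c_pos by (simp add: field_simps)
  then have "norm (x (Suc k) - x k) \<le> sqrt (2 / c * (\<Phi> (x k) - Pstar))" by (rule real_le_rsqrt)
  also have "\<dots> = sqrt (2 / c) * sqrt (\<Phi> (x k) - Pstar)" by (rule real_sqrt_mult)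
  finally show ?thesis .
qed

lemma KL_descent_recursion:
  assumes KL: "KL_at \<Phi> xs \<tau> \<phi>"
  shows "\<exists>K. \<forall>k\<ge>K. 0 \<le> \<phi> (\<Phi> (x k) - Pstar) \<and>
           2 * norm (x (Suc k) - x k) \<le> norm (x k - x (k - 1))
             + 2 * b / c * (\<phi> (\<Phi> (x k) - Pstar) - \<phi> (\<Phi> (x (Suc k)) - Pstar))"
proof -
  define E where "E k = \<Phi> (x k) - Pstar" for k
  have E_nonneg: "0 \<le> E k" for k using descent_excess_nonneg by (simp add: E_def)
  have E_decrease: "c / 2 * (norm (x (Suc k) - x k))\<^sup>2 \<le> E k - E (Suc k)" for k
    using decrease[of k] by (simp add: E_def)
  from KL obtain \<epsilon> where "0 < \<tau>" and phi: "\<phi> \<in> Psi \<tau>" and "\<epsilon> > 0"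
    and KL_ineq: "\<And>y g. dist y xs < \<epsilon> \<Longrightarrow> \<Phi> xs < \<Phi> y \<Longrightarrow> ereal (\<Phi> y) < ereal (\<Phi> xs) + \<tau> \<Longrightarrow>
          GDERIV \<Phi> y :> g \<Longrightarrow> 1 \<le> deriv \<phi> (\<Phi> y - \<Phi> xs) * norm g"
    unfolding KL_at_def by blast
  have "E \<longlonglongrightarrow> 0"
    using tendsto_diff[OF lim_P tendsto_const[of Pstar]] by (simp add: E_def[abs_def])
  then have "eventually (\<lambda>k. ereal (E k) < \<tau>) sequentially"
    using order_tendstoD(2)[of "\<lambda>k. ereal (E k)" 0] \<open>0 < \<tau>\<close> by (simp add: zero_ereal_def)
  moreover have "eventually (\<lambda>k. dist (x k) xs < \<epsilon>) sequentially"
    using tendstoD[OF lim_x \<open>\<epsilon> > 0\<close>] .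
  ultimately have "eventually (\<lambda>k. dist (x k) xs < \<epsilon> \<and> ereal (E k) < \<tau>) sequentially"
    by (simp add: eventually_conj_iff)
  then obtain K where K: "\<And>k. k \<ge> K \<Longrightarrow> dist (x k) xs < \<epsilon> \<and> ereal (E k) < \<tau>"
    unfolding eventually_sequentially by blast
  have "0 \<le> \<phi> (E k) \<and> 2 * norm (x (Suc k) - x k) \<le> norm (x k - x (k - 1))
          + 2 * b / c * (\<phi> (E k) - \<phi> (E (Suc k)))" if "k \<ge> Suc K" for k
  proof (cases "E k = 0")
    case True
    moreover have "0 \<le> c / 2 * (norm (x (Suc k) - x k))\<^sup>2" using c_pos by simp
    ultimately have "c / 2 * (norm (x (Suc k) - x k))\<^sup>2 \<le> 0" "E (Suc k) = 0"
      using E_decrease[of k] E_nonneg[of "Suc k"] by linarith+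
    moreover have "0 \<le> \<phi> 0" using PsiD(2)[OF phi, of 0] \<open>0 < \<tau>\<close> by (simp add: zero_ereal_def)
    ultimately show ?thesis using True c_pos by (simp add: mult_le_0_iff)
  next
    case False
    with E_nonneg have "0 < E k" by (simp add: order_less_le)
    have "k = Suc (k - 1)" using that by simp
    then have rel: "norm (G (x k)) \<le> b * norm (x k - x (k - 1))" by (metis rel_err)
    have "ereal (E k) < \<tau>" "dist (x k) xs < \<epsilon>" using K that by auto
    moreover from this(1) have "ereal (\<Phi> (x k)) < ereal (\<Phi> xs) + \<tau>"
      using \<open>0 < \<tau>\<close> by (cases \<tau>) (auto simp: E_def descent_limit_value)
    moreover have "\<Phi> xs < \<Phi> (x k)" using \<open>0 < E k\<close> by (simp add: E_def descent_limit_value)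
    ultimately have "1 \<le> deriv \<phi> (E k) * norm (G (x k))"
      using KL_ineq[OF _ _ _ grad] by (simp add: E_def descent_limit_value)
    from KL_descent_step[OF phi \<open>0 < E k\<close> \<open>ereal (E k) < \<tau>\<close> E_nonneg this rel E_decrease
        b_pos c_pos norm_ge_zero]
    show ?thesis using PsiD(2)[OF phi E_nonneg less_imp_le[OF \<open>ereal (E k) < \<tau>\<close>]] by simp
  qed
  then show ?thesis by (auto simp: E_def)
qed

lemma KL_convergence_rate:
  assumes KL: "KL_at \<Phi> xs \<tau> \<phi>"
  shows "\<exists>k1\<ge>1. \<exists>C>0. \<forall>k\<ge>k1.
           norm (x k - xs) \<le> C * max (\<phi> (\<Phi> (x k) - Pstar)) (sqrt (\<Phi> (x (k - 1)) - Pstar))"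
proof -
  define M where "M = 2 * b / c"
  define C where "C = sqrt (2 / c) + M"
  have "0 \<le> M" using b_pos c_pos by (simp add: M_def)
  obtain K where K: "\<And>k. k \<ge> K \<Longrightarrow> 0 \<le> \<phi> (\<Phi> (x k) - Pstar) \<and>
      2 * norm (x (Suc k) - x k) \<le> norm (x k - x (k - 1))
        + M * (\<phi> (\<Phi> (x k) - Pstar) - \<phi> (\<Phi> (x (Suc k)) - Pstar))"
    using KL_descent_recursion[OF KL] by (auto simp: M_def)
  show ?thesis
  proof (intro exI[of _ "Suc K"] conjI exI[of _ C] allI impI)
    show "0 < C" using b_pos c_pos by (simp add: C_def M_def add_pos_pos)
    fix k assume "Suc K \<le> k"
    define m where "m = max (\<phi> (\<Phi> (x k) - Pstar)) (sqrt (\<Phi> (x (k - 1)) - Pstar))"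
    have "(\<Sum>j=k..k+n. norm (x (Suc j) - x j))
        \<le> norm (x (Suc (k - 1)) - x (k - 1)) + M * \<phi> (\<Phi> (x k) - Pstar)" for n
    proof (rule sum_le_of_KL_recursion[where a = "\<lambda>j. norm (x (Suc j) - x j)"])
      fix j assume "k \<le> j"
      with \<open>Suc K \<le> k\<close> have "K \<le> j" "Suc (j - 1) = j" by auto
      with K show "0 \<le> \<phi> (\<Phi> (x j) - Pstar)"
        and "2 * norm (x (Suc j) - x j) \<le> norm (x (Suc (j - 1)) - x (j - 1))
               + M * (\<phi> (\<Phi> (x j) - Pstar) - \<phi> (\<Phi> (x (Suc j)) - Pstar))" by simp_all
    qed (use \<open>0 \<le> M\<close> in simp_all)
    then have "norm (x k - xs) \<le> norm (x (Suc (k - 1)) - x (k - 1)) + M * \<phi> (\<Phi> (x k) - Pstar)"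
      by (rule norm_diff_limit_le_path_length[OF lim_x])
    also have "\<dots> \<le> sqrt (2 / c) * m + M * m"
    proof (rule add_mono)
      have "sqrt (2 / c) * sqrt (\<Phi> (x (k - 1)) - Pstar) \<le> sqrt (2 / c) * m"
        using c_pos by (intro mult_left_mono) (auto simp: m_def)
      then show "norm (x (Suc (k - 1)) - x (k - 1)) \<le> sqrt (2 / c) * m"
        using descent_step_le_sqrt_excess[of "k - 1"] by linarith
      show "M * \<phi> (\<Phi> (x k) - Pstar) \<le> M * m"
        using \<open>0 \<le> M\<close> by (intro mult_left_mono) (auto simp: m_def)
    qed
    also have "\<dots> = C * m" by (simp add: C_def distrib_right)
    finally show "norm (x k - xs) \<le> C * max (\<phi> (\<Phi> (x k) - Pstar)) (sqrt (\<Phi> (x (k - 1)) - Pstar))"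
      by (simp only: m_def)
  qed simp
qed

end

theorem theorem3:
  fixes f :: "real^'n \<Rightarrow> real" and gradf :: "real^'n \<Rightarrow> real^'n"
    and F :: "real^'n \<Rightarrow> real^'m" and JF :: "real^'n \<Rightarrow> real^'n^'m"
    and \<rho> \<rho>0 \<alpha>bar c0 \<beta>low \<beta>up Lf MF LF :: real
    and S :: "(real^'n) set"
    and x :: "nat \<Rightarrow> real^'n" and \<beta> :: "nat \<Rightarrow> real"
    and xs :: "real^'n" and Pstar :: real
    and \<tau> :: ereal and \<phi> :: "real \<Rightarrow> real"
  assumes f_C1: "\<And>y. GDERIV f y :> gradf y" "continuous_on UNIV gradf"
    and F_C1: "\<And>y. (F has_derivative (\<lambda>h. JF y *v h)) (at y)" "continuous_on UNIV JF"
    \<comment> \<open>Assumption 1\<close>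
    and A1: "\<rho>0 \<ge> 0"
      "\<exists>c. {y. f y + \<rho>0 / 2 * (norm (F y))\<^sup>2 \<le> c} \<noteq> {} \<and>
           compact {y. f y + \<rho>0 / 2 * (norm (F y))\<^sup>2 \<le> c}"
      "bdd_below (range (\<lambda>y. f y + \<rho>0 / 2 * (norm (F y))\<^sup>2))"
    \<comment> \<open>Assumption 2\<close>
    and A2: "compact S" "convex S" "Lf > 0" "MF > 0" "LF > 0"
      "\<And>y z. y \<in> S \<Longrightarrow> z \<in> S \<Longrightarrow> norm (gradf y - gradf z) \<le> Lf * norm (y - z)"
      "\<And>y. y \<in> S \<Longrightarrow> onorm (\<lambda>h. JF y *v h) \<le> MF"
      "\<And>y z. y \<in> S \<Longrightarrow> z \<in> S \<Longrightarrow> onorm (\<lambda>h. (JF y - JF z) *v h) \<le> LF * norm (y - z)"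
      "\<And>y. y \<in> S \<Longrightarrow> rank (JF y) = CARD('m)"
    \<comment> \<open>Assumption 3\<close>
    and A3: "\<And>y. norm (F y) \<le> 1 \<Longrightarrow> f y \<le> \<alpha>bar"
    and par: "\<rho> \<ge> max 1 (3 * \<rho>0)" "c0 > 0" "f (x 0) \<le> \<alpha>bar"
      "(norm (F (x 0)))\<^sup>2 \<le> min 1 (2 * c0 / \<rho>)"
    and lqp: "\<beta>low > 0"
      "\<And>k. \<beta> (Suc k) \<ge> \<beta>low"
      "\<And>k y. Pbar f gradf F JF \<rho> (x k) (x (Suc k)) + \<beta> (Suc k) / 2 * (norm (x (Suc k) - x k))\<^sup>2
              \<le> Pbar f gradf F JF \<rho> (x k) y + \<beta> (Suc k) / 2 * (norm (y - x k))\<^sup>2"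
      "\<And>k. Pen f F \<rho> (x (Suc k)) \<le> Pen f F \<rho> (x k) - \<beta> (Suc k) / 2 * (norm (x (Suc k) - x k))\<^sup>2"
    and iter_S: "\<And>k. x k \<in> S"
    and beta_bd: "\<And>k. k \<ge> 1 \<Longrightarrow> \<beta>low \<le> \<beta> k \<and> \<beta> k \<le> \<beta>up"
    and lim_x: "x \<longlonglongrightarrow> xs"
    and lim_P: "(\<lambda>k. Pen f F \<rho> (x k)) \<longlonglongrightarrow> Pstar"
    and KL: "KL_at (Pen f F \<rho>) xs \<tau> \<phi>"
  shows "\<exists>k1\<ge>1. \<exists>C>0. \<forall>k\<ge>k1.
           norm (x k - xs) \<le> C * max (\<phi> (Pen f F \<rho> (x k) - Pstar)) (sqrt (Pen f F \<rho> (x (k - 1)) - Pstar))"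
proof -
  have "continuous_on S F"
    by (intro continuous_at_imp_continuous_on ballI has_derivative_continuous[OF F_C1(1)])
  then have "bounded (F ` S)" using A2(1) by (intro compact_imp_bounded compact_continuous_image)
  then obtain B where B: "\<And>y. y \<in> S \<Longrightarrow> norm (F y) \<le> B" unfolding bounded_iff by auto
  have "0 \<le> B" using B[OF iter_S[of 0]] norm_ge_zero order_trans by blast
  have "\<beta>low \<le> \<beta>up" using beta_bd[of 1] by simp
  show ?thesis
  proof (rule KL_convergence_rate[OF GDERIV_Pen[OF f_C1(1) F_C1(1)] _ lqp(1) _ _ lim_x lim_P KL])
    show "0 < Lf + \<rho> * (LF * B + 2 * MF * MF) + \<beta>up"
      using A2(3-5) par(1) \<open>0 \<le> B\<close> lqp(1) \<open>\<beta>low \<le> \<beta>up\<close> by (simp add: add_pos_nonneg)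
    show "\<beta>low / 2 * (norm (x (Suc k) - x k))\<^sup>2 \<le> Pen f F \<rho> (x k) - Pen f F \<rho> (x (Suc k))" for k
    proof -
      have "\<beta>low / 2 * (norm (x (Suc k) - x k))\<^sup>2 \<le> \<beta> (Suc k) / 2 * (norm (x (Suc k) - x k))\<^sup>2"
        using lqp(2)[of k] by (intro mult_right_mono divide_right_mono) auto
      then show ?thesis using lqp(4)[of k] by linarith
    qed
    show "norm (gradf (x (Suc k)) + \<rho> *\<^sub>R (transpose (JF (x (Suc k))) *v F (x (Suc k))))
        \<le> (Lf + \<rho> * (LF * B + 2 * MF * MF) + \<beta>up) * norm (x (Suc k) - x k)" for k
      using lqp(1) lqp(2)[of k] par(1) beta_bd[of "Suc k"]
      by (intro norm_grad_Pen_le_step[OF F_C1(1) A2(2) iter_S iter_S A2(6-8) B lqp(3)]) auto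
  qed
qed

end
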